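(* In the setting below, suppose $\max_{g\in G_-}|\delta(g)|\ge E_k-\lfloor E_k\rfloor_2+2$. Then there exists $g_{k+1}\in\mathrm{Co}_0$ such that $S_{k+1}=g_{k+1}S\setminus U_k$ satisfies $|S_{k+1}|\ge |S|+2-\lfloor E_k\rfloor_2$, and $S_1,\dots,S_{k+1}$ are pairwise disjoint.
   Context: Let $\Lambda_{24}$ be the Leech lattice scaled so minimal vectors have length $2$, $\mathcal C$ its $196560$ minimal vectors, and $\mathrm{Co}_0$ the finite group of linear isometries of $\mathbb{R}^{24}$ mapping $\Lambda_{24}$ onto itself (acting transitively on $\mathcal C$). Fix an antipodal ($S=-S$) set $S\subseteq\mathcal C$ with $\langle x,y\rangle\le1$ for distinct $x,y\in S$. Let $k\ge1$, $S_1=S$, $g_1=\mathrm{id}$, and for $2\le j\le k$, $S_j=g_jS\setminus(S_1\cup\dots\cup S_{j-1})$ for some $g_j\in\mathrm{Co}_0$, with $|S_j|\ge|S|\bigl(1-\sum_{i<j}|S_i|/|\mathcal C|\bigr)$. Put $U_k=S_1\cup\dots\cup S_k$, $E_k=\mathbb{E}_g|gS\cap U_k|$ ($g$ uniform in $\mathrm{Co}_0$). $\lfloor x\rfloor_2$ is the greatest even integer $\le x$. $\delta(g)=|gS\cap U_k|-E_k$, $G_-=\{g:\delta(g)<0\}$. *)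

theory Defs
  imports "HOL-Analysis.Analysis"
begin

type_synonym vec24 = "real ^ 24"

definition coord :: "vec24 \<Rightarrow> nat \<Rightarrow> real" where
  "coord x n = x $ (of_nat n :: 24)"

text \<open>Generator matrix [I | B] of the extended binary Golay code
  (extended quadratic residue code of length 24).\<close>
definition golay_gen_rows :: "nat list list" where
  "golay_gen_rows = [
    [1, 0, 0, 0, 0, 0, 0, 0, 0, 0, 0, 0, 0, 1, 1, 1, 1, 1, 1, 1, 1, 1, 1, 1],
    [0, 1, 0, 0, 0, 0, 0, 0, 0, 0, 0, 0, 1, 1, 1, 0, 1, 1, 1, 0, 0, 0, 1, 0],
    [0, 0, 1, 0, 0, 0, 0, 0, 0, 0, 0, 0, 1, 0, 1, 1, 0, 1, 1, 1, 0, 0, 0, 1],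
    [0, 0, 0, 1, 0, 0, 0, 0, 0, 0, 0, 0, 1, 1, 0, 1, 1, 0, 1, 1, 1, 0, 0, 0],
    [0, 0, 0, 0, 1, 0, 0, 0, 0, 0, 0, 0, 1, 0, 1, 0, 1, 1, 0, 1, 1, 1, 0, 0],
    [0, 0, 0, 0, 0, 1, 0, 0, 0, 0, 0, 0, 1, 0, 0, 1, 0, 1, 1, 0, 1, 1, 1, 0],
    [0, 0, 0, 0, 0, 0, 1, 0, 0, 0, 0, 0, 1, 0, 0, 0, 1, 0, 1, 1, 0, 1, 1, 1],
    [0, 0, 0, 0, 0, 0, 0, 1, 0, 0, 0, 0, 1, 1, 0, 0, 0, 1, 0, 1, 1, 0, 1, 1],
    [0, 0, 0, 0, 0, 0, 0, 0, 1, 0, 0, 0, 1, 1, 1, 0, 0, 0, 1, 0, 1, 1, 0, 1],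
    [0, 0, 0, 0, 0, 0, 0, 0, 0, 1, 0, 0, 1, 1, 1, 1, 0, 0, 0, 1, 0, 1, 1, 0],
    [0, 0, 0, 0, 0, 0, 0, 0, 0, 0, 1, 0, 1, 0, 1, 1, 1, 0, 0, 0, 1, 0, 1, 1],
    [0, 0, 0, 0, 0, 0, 0, 0, 0, 0, 0, 1, 1, 1, 0, 1, 1, 1, 0, 0, 0, 1, 0, 1]
  ]"

text \<open>Golay code, as the set of supports (subsets of {0..<24}) of codewords:
  all GF(2)-linear combinations of the generator rows.\<close>
definition golay_code :: "nat set set" where
  "golay_code = {{n. n < 24 \<and> odd (card {j \<in> c. golay_gen_rows ! j ! n = 1})} | c. c \<subseteq> {..<12}}"

text \<open>Leech lattice (Conway--Sloane, SPLAG Ch.4 Sec.11), scaled by 1/sqrt 8 so that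
  minimal vectors have squared norm 4, i.e. length 2.\<close>
definition leech :: "vec24 set" where
  "leech = {x. \<exists>z :: nat \<Rightarrow> int. \<exists>m :: int. m \<in> {0, 1} \<and>
      (\<forall>n<24. coord x n = real_of_int (z n) / sqrt 8) \<and>
      (\<forall>n<24. z n mod 2 = m) \<and>
      (\<Sum>n<24. z n) mod 8 = 4 * m \<and>
      (\<forall>\<nu>::int \<in> {0..3}. {n. n < 24 \<and> z n mod 4 = \<nu>} \<in> golay_code)}"

definition leech_min :: "vec24 set" where
  "leech_min = {x \<in> leech. norm x = 2}"

definition Co0 :: "(vec24 \<Rightarrow> vec24) set" where
  "Co0 = {g. linear g \<and> (\<forall>x. norm (g x) = norm x) \<and> g ` leech = leech}"

definition floor_even :: "real \<Rightarrow> int" where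
  "floor_even x = 2 * \<lfloor>x / 2\<rfloor>"

definition avg_overlap :: "vec24 set \<Rightarrow> vec24 set \<Rightarrow> real" where
  "avg_overlap S U = (\<Sum>g\<in>Co0. real (card (g ` S \<inter> U))) / real (card Co0)"

end

theory Submission
  imports Defs
begin

text \<open>Choose \<open>g \<in> G\<^sub>-\<close> maximising \<open>|\<delta>(g)|\<close>. Since \<open>\<delta>(g) < 0\<close>, the hypothesis gives
  \<open>|g S \<inter> U\<^sub>k| = E\<^sub>k + \<delta>(g) \<le> \<lfloor>E\<^sub>k\<rfloor>\<^sub>2 - 2\<close>. As \<open>g\<close> is injective, the other
  \<open>|S| - |g S \<inter> U\<^sub>k|\<close> points of \<open>g S\<close> form \<open>S\<^sub>k\<^sub>+\<^sub>1\<close>, which misses \<open>U\<^sub>k\<close> by construction,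
  while \<open>S\<^sub>1, \<dots>, S\<^sub>k\<close> are disjoint by their greedy definition.\<close>

lemma inj_Co0:
  assumes "g \<in> Co0"
  shows "inj g"
proof (rule injI)
  fix x y assume "g x = g y"
  have "linear g" and "\<And>z. norm (g z) = norm z"
    using assms unfolding Co0_def by auto
  then have "norm (x - y) = norm (g x - g y)"
    by (metis linear_diff)
  with \<open>g x = g y\<close> show "x = y" by simp
qed

lemma card_le_card_image_Int_plus_Diff:
  assumes "inj_on g S"
  shows "card S \<le> card (g ` S \<inter> U) + card (g ` S - U)"
proof (cases "finite S")
  case True
  then show ?thesis
    using card_Int_Diff[of "g ` S" U] card_image[OF assms] by simp
next
  case False
  then show ?thesis by simp
qed

lemma avg_overlap_infinite: "infinite Co0 \<Longrightarrow> avg_overlap S U = 0"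
  by (simp add: avg_overlap_def)

lemma Max_abs_neg_attained:
  fixes f :: "'a \<Rightarrow> real"
  assumes "finite G" "G \<noteq> {}" "\<forall>g\<in>G. f g < 0" "c \<le> Max ((\<lambda>g. \<bar>f g\<bar>) ` G)"
  shows "\<exists>g\<in>G. f g \<le> - c"
proof -
  have "Max ((\<lambda>g. \<bar>f g\<bar>) ` G) \<in> (\<lambda>g. \<bar>f g\<bar>) ` G"
    using assms(1,2) by (intro Max_in) auto
  then obtain g where "g \<in> G" "Max ((\<lambda>g. \<bar>f g\<bar>) ` G) = \<bar>f g\<bar>"
    by blast
  with assms(3,4) show ?thesis by force
qed

lemma greedy_disjoint_family_on:
  fixes Ss T :: "nat \<Rightarrow> 'a set"
  assumes "\<forall>j\<in>{2..k}. Ss j = T j - (\<Union>i\<in>{1..<j}. Ss i)"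
  shows "disjoint_family_on Ss {1..k}"
proof -
  have "Ss i \<inter> Ss j = {}" if "i \<in> {1..k}" "j \<in> {1..k}" "i < j" for i j
  proof -
    have "Ss j = T j - (\<Union>i\<in>{1..<j}. Ss i)" using assms that by simp
    moreover have "i \<in> {1..<j}" using that by simp
    ultimately show ?thesis by blast
  qed
  then show ?thesis
    unfolding disjoint_family_on_def by (metis inf_commute linorder_neqE_nat)
qed

lemma disjoint_family_on_fun_upd_Diff:
  assumes "disjoint_family_on A I" "n \<notin> I"
  shows "disjoint_family_on (A(n := B - (\<Union>i\<in>I. A i))) (insert n I)"
  using assms unfolding disjoint_family_on_def by auto

theorem lemma4p11:
  fixes S :: "vec24 set" and k :: nat
    and Ss :: "nat \<Rightarrow> vec24 set" and gs :: "nat \<Rightarrow> (vec24 \<Rightarrow> vec24)"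
  assumes S_sub: "S \<subseteq> leech_min"
    and S_antipodal: "uminus ` S = S"
    and S_inner: "\<forall>x\<in>S. \<forall>y\<in>S. x \<noteq> y \<longrightarrow> x \<bullet> y \<le> 1"
    and k_pos: "1 \<le> k"
    and S1: "Ss 1 = S" and g1: "gs 1 = id"
    and gs_Co0: "\<forall>j\<in>{2..k}. gs j \<in> Co0"
    and Ss_def: "\<forall>j\<in>{2..k}. Ss j = gs j ` S - (\<Union>i\<in>{1..<j}. Ss i)"
    and Ss_size: "\<forall>j\<in>{2..k}. real (card (Ss j)) \<ge>
        real (card S) * (1 - (\<Sum>i\<in>{1..<j}. real (card (Ss i))) / real (card leech_min))"
    and hyp: "let U = (\<Union>i\<in>{1..k}. Ss i); E = avg_overlap S U;
               \<delta> = (\<lambda>g. real (card (g ` S \<inter> U)) - E);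
               Gm = {g\<in>Co0. \<delta> g < 0}
             in Gm \<noteq> {} \<and> Max ((\<lambda>g. \<bar>\<delta> g\<bar>) ` Gm) \<ge> E - real_of_int (floor_even E) + 2"
  shows "let U = (\<Union>i\<in>{1..k}. Ss i); E = avg_overlap S U
         in \<exists>g\<in>Co0. real (card (g ` S - U)) \<ge> real (card S) + 2 - real_of_int (floor_even E)
              \<and> (\<forall>i\<in>{1..k+1}. \<forall>j\<in>{1..k+1}. i \<noteq> j \<longrightarrow>
                   (if i = k+1 then g ` S - U else Ss i) \<inter> (if j = k+1 then g ` S - U else Ss j) = {})"
proof -
  define U where "U = (\<Union>i\<in>{1..k}. Ss i)"
  define E where "E = avg_overlap S U"
  define \<delta> where "\<delta> = (\<lambda>g. real (card (g ` S \<inter> U)) - E)"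
  define Gm where "Gm = {g\<in>Co0. \<delta> g < 0}"
  have Gm_ne: "Gm \<noteq> {}" and Max_ge: "E - floor_even E + 2 \<le> Max ((\<lambda>g. \<bar>\<delta> g\<bar>) ` Gm)"
    using hyp unfolding Let_def U_def[symmetric] E_def[symmetric] \<delta>_def Gm_def by auto
  \<comment> \<open>If \<open>Co0\<close> were infinite, \<open>card Co0 = 0\<close> would make \<open>E = 0\<close> and \<open>G\<^sub>-\<close> empty.\<close>
  have "finite Co0"
    using Gm_ne avg_overlap_infinite unfolding Gm_def \<delta>_def E_def by fastforce
  then have "finite Gm" by (simp add: Gm_def)
  moreover have "\<forall>g\<in>Gm. \<delta> g < 0" by (simp add: Gm_def)
  ultimately obtain g where "g \<in> Gm" and \<delta>_g: "\<delta> g \<le> - (E - floor_even E + 2)"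
    using Max_abs_neg_attained[OF _ Gm_ne _ Max_ge] by blast
  then have "g \<in> Co0" by (simp add: Gm_def)
  have "card S \<le> card (g ` S \<inter> U) + card (g ` S - U)"
    using card_le_card_image_Int_plus_Diff inj_Co0[OF \<open>g \<in> Co0\<close>] by (metis inj_on_subset subset_UNIV)
  with \<delta>_g have size: "real (card S) + 2 - floor_even E \<le> real (card (g ` S - U))"
    unfolding \<delta>_def by linarith
  have "disjoint_family_on (Ss(k+1 := g ` S - U)) (insert (k+1) {1..k})"
    unfolding U_def by (rule disjoint_family_on_fun_upd_Diff[OF greedy_disjoint_family_on[OF Ss_def]]) simp
  moreover have "insert (k+1) {1..k} = {1..k+1}" using k_pos by auto
  ultimately have "\<forall>i\<in>{1..k+1}. \<forall>j\<in>{1..k+1}. i \<noteq> j \<longrightarrow>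
      (if i = k+1 then g ` S - U else Ss i) \<inter> (if j = k+1 then g ` S - U else Ss j) = {}"
    unfolding disjoint_family_on_def by (simp add: fun_upd_def)
  with size \<open>g \<in> Co0\<close> show ?thesis
    unfolding Let_def U_def[symmetric] E_def[symmetric] by blast
qed

end
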